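(* Let $S$ be a semigroup and let $a,b\in S$ satisfy $a=aba$ and $b=bab$. Then \[(aSa,\cdot)\cong(aSb,\star_{aab})\cong(bSa,\star_{baa}).\]
   Context: For $u,v$ in a semigroup $S$, $uSv=\{uxv: x\in S\}$. For $c\in S$, $\star_c$ denotes the sandwich operation $x\star_c y=xcy$. $(T,\star_c)$ denotes the subset $T\subseteq S$ with the operation $\star_c$ (under which it is closed), and $(T,\cdot)$ denotes $T$ with the original operation of $S$. *)

theory Defs
  imports Main
begin

definition sandwich_set :: "'a::semigroup_mult \<Rightarrow> 'a \<Rightarrow> 'a set" where
  "sandwich_set u v = {u * x * v | x. True}"

definition sandwich_op :: "'a::semigroup_mult \<Rightarrow> 'a \<Rightarrow> 'a \<Rightarrow> 'a" where
  "sandwich_op c x y = x * c * y"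

definition magma_iso :: "'a set \<Rightarrow> ('a \<Rightarrow> 'a \<Rightarrow> 'a) \<Rightarrow> 'b set \<Rightarrow> ('b \<Rightarrow> 'b \<Rightarrow> 'b) \<Rightarrow> bool" where
  "magma_iso A opA B opB \<longleftrightarrow>
     (\<exists>f. bij_betw f A B \<and> (\<forall>x\<in>A. \<forall>y\<in>A. f (opA x y) = opB (f x) (f y)))"

end

theory Submission
  imports Defs
begin

text \<open>For a regular pair (a = aba, b = bab), right multiplication by b maps aSa bijectively
  onto aSb with inverse right multiplication by a, and the b-a conjugation y \<mapsto> b y a maps aSb
  onto bSa with inverse y \<mapsto> a y b. Both maps transport the operations because every element
  of aS_ is fixed by left multiplication with ab, and every element of _Sa by right
  multiplication with ba, which absorbs the extra factors of the sandwich elements.\<close>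

lemma sandwich_setI: "u * x * v \<in> sandwich_set u v"
  unfolding sandwich_set_def by blast

lemma sandwich_setE:
  assumes "y \<in> sandwich_set u v"
  obtains x where "y = u * x * v"
  using assms unfolding sandwich_set_def by blast

lemma sandwich_set_mult_right:
  assumes "y \<in> sandwich_set u v"
  shows "y * w \<in> sandwich_set u w"
proof -
  obtain x where "y = u * x * v" using assms by (rule sandwich_setE)
  then have "y * w = u * (x * v) * w" by (simp add: mult.assoc)
  then show ?thesis by (simp add: sandwich_setI)
qed

lemma sandwich_set_mult_left:
  assumes "y \<in> sandwich_set u v"
  shows "w * y \<in> sandwich_set w v"
proof -
  obtain x where "y = u * x * v" using assms by (rule sandwich_setE)
  then have "w * y = w * (u * x) * v" by (simp add: mult.assoc)
  then show ?thesis by (simp add: sandwich_setI)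
qed

lemma sandwich_set_absorb_left:
  assumes "u * w * u = u" and "y \<in> sandwich_set u v"
  shows "u * w * y = y"
proof -
  obtain x where "y = u * x * v" using assms(2) by (rule sandwich_setE)
  then show ?thesis using assms(1) by (metis mult.assoc)
qed

lemma sandwich_set_absorb_right:
  assumes "v * w * v = v" and "y \<in> sandwich_set u v"
  shows "y * w * v = y"
proof -
  obtain x where "y = u * x * v" using assms(2) by (rule sandwich_setE)
  then show ?thesis using assms(1) by (metis mult.assoc)
qed

lemma magma_isoI:
  assumes "\<And>x. x \<in> A \<Longrightarrow> f x \<in> B" and "\<And>y. y \<in> B \<Longrightarrow> g y \<in> A"
    and "\<And>x. x \<in> A \<Longrightarrow> g (f x) = x" and "\<And>y. y \<in> B \<Longrightarrow> f (g y) = y"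
    and "\<And>x y. x \<in> A \<Longrightarrow> y \<in> A \<Longrightarrow> f (opA x y) = opB (f x) (f y)"
  shows "magma_iso A opA B opB"
proof -
  have "bij_betw f A B"
    by (rule bij_betw_byWitness[where f' = g]) (use assms in auto)
  then show ?thesis unfolding magma_iso_def using assms(5) by blast
qed

lemma magma_iso_sandwich_set_mult_right:
  fixes a b :: "'a::semigroup_mult"
  assumes aba: "a * b * a = a" and bab: "b * a * b = b"
  shows "magma_iso (sandwich_set a a) (*) (sandwich_set a b) (sandwich_op (a * a * b))"
proof (rule magma_isoI[where f = "\<lambda>x. x * b" and g = "\<lambda>y. y * a"])
  fix x y assume x: "x \<in> sandwich_set a a" and y: "y \<in> sandwich_set a a"
  have "sandwich_op (a * a * b) (x * b) (y * b) = (x * b * a) * (a * b * y) * b"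
    unfolding sandwich_op_def by (simp add: mult.assoc)
  also have "\<dots> = x * y * b"
    using sandwich_set_absorb_right[OF aba x] sandwich_set_absorb_left[OF aba y] by simp
  finally show "x * y * b = sandwich_op (a * a * b) (x * b) (y * b)" ..
qed (use aba bab sandwich_set_absorb_right sandwich_set_mult_right in \<open>auto simp: mult.assoc\<close>)

lemma magma_iso_sandwich_set_conjugate:
  fixes a b :: "'a::semigroup_mult"
  assumes aba: "a * b * a = a" and bab: "b * a * b = b"
  shows "magma_iso (sandwich_set a b) (sandwich_op (a * a * b))
                   (sandwich_set b a) (sandwich_op (b * a * a))"
proof (rule magma_isoI[where f = "\<lambda>x. b * x * a" and g = "\<lambda>y. a * y * b"])
  fix x y assume x: "x \<in> sandwich_set a b" and y: "y \<in> sandwich_set a b"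
  have "sandwich_op (b * a * a) (b * x * a) (b * y * a) = b * x * (a * b * a) * (a * b * y) * a"
    unfolding sandwich_op_def by (simp add: mult.assoc)
  also have "\<dots> = b * sandwich_op (a * a * b) x y * a"
    using aba sandwich_set_absorb_left[OF aba y] unfolding sandwich_op_def by (simp add: mult.assoc)
  finally show "b * sandwich_op (a * a * b) x y * a
      = sandwich_op (b * a * a) (b * x * a) (b * y * a)" ..
next
  fix x assume "x \<in> sandwich_set a b"
  then show "a * (b * x * a) * b = x"
    using sandwich_set_absorb_left[OF aba] sandwich_set_absorb_right[OF bab]
    by (metis mult.assoc)
next
  fix y assume "y \<in> sandwich_set b a"
  then show "b * (a * y * b) * a = y"
    using sandwich_set_absorb_left[OF bab] sandwich_set_absorb_right[OF aba]
    by (metis mult.assoc)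
qed (use sandwich_set_mult_left sandwich_set_mult_right in blast)+

theorem lemma2p5:
  fixes a b :: "'a::semigroup_mult"
  assumes "a = a * b * a" and "b = b * a * b"
  shows "magma_iso (sandwich_set a a) (*) (sandwich_set a b) (sandwich_op (a * a * b))
       \<and> magma_iso (sandwich_set a b) (sandwich_op (a * a * b)) (sandwich_set b a) (sandwich_op (b * a * a))"
  using magma_iso_sandwich_set_mult_right[OF assms[symmetric]]
    magma_iso_sandwich_set_conjugate[OF assms[symmetric]] by blast

end
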